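(* Let $\ell$ be a log-scale on a set $X$, and let $(x_n)$ and $(y_n)$ be Cauchy sequences with respect to $\ell$ that are not equivalent. Then there exists a constant $\Delta>0$ such that any two partial limits of the sequence $\ell(x_n,y_n)$ differ from each other by at most $\Delta$.
   Context: A log-scale on a set $X$ is a function $\ell:X\times X\to\mathbb{R}\cup\{\infty\}$ such that $\ell(x,y)=\ell(y,x)$, $\ell(x,y)=+\infty$ iff $x=y$, and for some $\delta\ge0$, $\ell(x,z)\ge\min(\ell(x,y),\ell(y,z))-\delta$ for all $x,y,z$. A sequence $(x_n)$ is Cauchy (with respect to $\ell$) if $\ell(x_n,x_m)\to\infty$ as $n,m\to\infty$. Two Cauchy sequences $(x_n),(y_n)$ are equivalent if $\ell(x_n,y_n)\to\infty$. *)

theory Defs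
  imports "HOL-Analysis.Analysis"
begin

definition log_scale :: "'a set \<Rightarrow> ('a \<Rightarrow> 'a \<Rightarrow> ereal) \<Rightarrow> bool" where
  "log_scale X l \<longleftrightarrow>
     (\<forall>x\<in>X. \<forall>y\<in>X. l x y \<noteq> -\<infinity>) \<and>
     (\<forall>x\<in>X. \<forall>y\<in>X. l x y = l y x) \<and>
     (\<forall>x\<in>X. \<forall>y\<in>X. l x y = \<infinity> \<longleftrightarrow> x = y) \<and>
     (\<exists>\<delta>::real. \<delta> \<ge> 0 \<and>
        (\<forall>x\<in>X. \<forall>y\<in>X. \<forall>z\<in>X. l x z \<ge> min (l x y) (l y z) - ereal \<delta>))"

definition ls_cauchy :: "('a \<Rightarrow> 'a \<Rightarrow> ereal) \<Rightarrow> (nat \<Rightarrow> 'a) \<Rightarrow> bool" where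
  "ls_cauchy l x \<longleftrightarrow> (\<forall>M::real. \<exists>N. \<forall>n\<ge>N. \<forall>m\<ge>N. l (x n) (x m) \<ge> ereal M)"

definition ls_equivalent :: "('a \<Rightarrow> 'a \<Rightarrow> ereal) \<Rightarrow> (nat \<Rightarrow> 'a) \<Rightarrow> (nat \<Rightarrow> 'a) \<Rightarrow> bool" where
  "ls_equivalent l x y \<longleftrightarrow> ((\<lambda>n. l (x n) (y n)) \<longlongrightarrow> \<infinity>) sequentially"

definition partial_limit :: "(nat \<Rightarrow> ereal) \<Rightarrow> ereal \<Rightarrow> bool" where
  "partial_limit s a \<longleftrightarrow> (\<exists>r. strict_mono r \<and> ((s \<circ> r) \<longlongrightarrow> a) sequentially)"

end

theory Submission
  imports Defs
begin

text \<open>Non-equivalence gives a bound $B$ with $\ell(x_m,y_m) \le B$ for infinitely many $m$.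
  Fix such an $m$ so late that $\ell(x_n,x_m)$ and $\ell(y_n,y_m)$ exceed $B + 2\delta$ for all
  later $n$. The quasi-ultrametric inequality along the path $x_n, x_m, y_m, y_n$ gives
  $\ell(x_n,y_n) \ge \ell(x_m,y_m) - 2\delta$, and along $x_m, x_n, y_n, y_m$ it gives
  $\ell(x_n,y_n) \le \ell(x_m,y_m) + 2\delta$. So eventually the sequence $\ell(x_n,y_n)$ stays in an
  interval of length $4\delta$, and so do all its partial limits.\<close>

lemma partial_limit_bounds:
  assumes "partial_limit s a" and "\<forall>\<^sub>F n in sequentially. c \<le> s n \<and> s n \<le> d"
  shows "c \<le> a \<and> a \<le> d"
proof -
  obtain r where r: "strict_mono r" "(s \<circ> r) \<longlonglongrightarrow> a"
    using assms(1) unfolding partial_limit_def by blast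
  have bounds: "\<forall>\<^sub>F k in sequentially. c \<le> (s \<circ> r) k \<and> (s \<circ> r) k \<le> d"
    using eventually_subseq[OF r(1) assms(2)] by simp
  have "c \<le> a"
    using bounds by (intro tendsto_lowerbound[OF r(2)]) (auto elim: eventually_mono)
  moreover have "a \<le> d"
    using bounds by (intro tendsto_upperbound[OF r(2)]) (auto elim: eventually_mono)
  ultimately show ?thesis ..
qed

locale log_scale_const =
  fixes X :: "'a set" and l :: "'a \<Rightarrow> 'a \<Rightarrow> ereal" and \<delta> :: real
  assumes delta_nonneg: "0 \<le> \<delta>"
    and not_MInfty: "\<lbrakk>u \<in> X; v \<in> X\<rbrakk> \<Longrightarrow> l u v \<noteq> -\<infinity>"
    and min_le_plus: "\<lbrakk>u \<in> X; v \<in> X; w \<in> X\<rbrakk> \<Longrightarrow> min (l u v) (l v w) \<le> l u w + ereal \<delta>"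

lemma log_scale_imp_const:
  assumes "log_scale X l"
  shows "\<exists>\<delta>. log_scale_const X l \<delta>"
  using assms unfolding log_scale_def log_scale_const_def
  by (metis ereal_minus_le abs_ereal.simps(1) PInfty_neq_ereal(2))

context log_scale_const
begin

lemma min3_le_plus:
  assumes "u \<in> X" "v \<in> X" "w \<in> X" "z \<in> X"
  shows "min (l u v) (min (l v w) (l w z)) \<le> l u z + ereal (2 * \<delta>)"
proof -
  have "min (l u v) (min (l v w) (l w z)) = min (min (l u v) (l v w)) (l w z)"
    by (simp add: min.assoc)
  also have "\<dots> \<le> min (l u w + ereal \<delta>) (l w z + ereal \<delta>)"
    using min_le_plus[OF assms(1-3)] delta_nonneg
    by (intro min.mono) (auto intro: order_trans ereal_le_add_self)
  also have "\<dots> \<le> min (l u w) (l w z) + ereal \<delta>"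
    by (auto simp: min_def add_right_mono)
  also have "\<dots> \<le> l u z + ereal \<delta> + ereal \<delta>"
    using min_le_plus[OF assms(1,3,4)] by (rule add_right_mono)
  also have "\<dots> = l u z + ereal (2 * \<delta>)"
    by (simp add: add.assoc)
  finally show ?thesis .
qed

lemma le_plus_of_close:
  assumes "u \<in> X" "u' \<in> X" "v \<in> X" "v' \<in> X"
    and "l u' v' \<le> l u u'" "l u' v' \<le> l v' v"
  shows "l u' v' \<le> l u v + ereal (2 * \<delta>)"
  using min3_le_plus[of u u' v' v] assms by (simp add: min_absorb2)

lemma le_plus_of_far:
  assumes "u \<in> X" "u' \<in> X" "v \<in> X" "v' \<in> X"
    and "l u' v' + ereal (2 * \<delta>) < l u' u" "l u' v' + ereal (2 * \<delta>) < l v v'"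
  shows "l u v \<le> l u' v' + ereal (2 * \<delta>)"
proof (rule ccontr)
  assume "\<not> ?thesis"
  with assms(5,6) have "l u' v' + ereal (2 * \<delta>) < min (l u' u) (min (l u v) (l v v'))"
    by simp
  with min3_le_plus[of u' u v v'] assms(1-4) show False
    by (metis leD)
qed

lemma partial_limits_pinched:
  assumes "\<And>n. x n \<in> X" "\<And>n. y n \<in> X" "ls_cauchy l x" "ls_cauchy l y"
    and "\<not> ls_equivalent l x y"
  obtains r where "\<And>a. partial_limit (\<lambda>n. l (x n) (y n)) a \<Longrightarrow>
      ereal (r - 2 * \<delta>) \<le> a \<and> a \<le> ereal (r + 2 * \<delta>)"
proof -
  define s where "s = (\<lambda>n. l (x n) (y n))"
  obtain B where "frequently (\<lambda>n. s n \<le> ereal B) sequentially"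
    using assms(5) unfolding ls_equivalent_def tendsto_PInfty s_def
    by (auto simp: not_eventually not_less)
  define M where "M = B + 2 * \<delta> + 1"
  obtain N1 where N1: "\<And>n m. N1 \<le> n \<Longrightarrow> N1 \<le> m \<Longrightarrow> ereal M \<le> l (x n) (x m)"
    using assms(3) unfolding ls_cauchy_def by blast
  obtain N2 where N2: "\<And>n m. N2 \<le> n \<Longrightarrow> N2 \<le> m \<Longrightarrow> ereal M \<le> l (y n) (y m)"
    using assms(4) unfolding ls_cauchy_def by blast
  obtain m where m: "max N1 N2 \<le> m" "s m \<le> ereal B"
    using \<open>frequently _ _\<close> unfolding frequently_sequentially by blast
  obtain r where r: "s m = ereal r"
    using m(2) not_MInfty[OF assms(1,2)] by (cases "s m") (auto simp: s_def)
  have "ereal (r - 2 * \<delta>) \<le> s n \<and> s n \<le> ereal (r + 2 * \<delta>)" if "max N1 N2 \<le> n" for n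
  proof
    have "s m \<le> ereal M"
      using m(2) delta_nonneg unfolding M_def by (simp add: order_trans)
    with that m(1) N1 N2 have "s m \<le> s n + ereal (2 * \<delta>)"
      unfolding s_def by (intro le_plus_of_close) (auto intro: order_trans assms(1,2))
    with r show "ereal (r - 2 * \<delta>) \<le> s n"
      by (cases "s n") auto
    have "s m + ereal (2 * \<delta>) < ereal M"
      using m(2) r unfolding M_def by simp
    with that m(1) N1 N2 have "s n \<le> s m + ereal (2 * \<delta>)"
      unfolding s_def by (intro le_plus_of_far) (auto intro: order.strict_trans2 assms(1,2))
    with r show "s n \<le> ereal (r + 2 * \<delta>)"
      by simp
  qed
  then have "\<forall>\<^sub>F n in sequentially. ereal (r - 2 * \<delta>) \<le> s n \<and> s n \<le> ereal (r + 2 * \<delta>)"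
    unfolding eventually_sequentially by blast
  then show thesis
    by (intro that[of r] partial_limit_bounds) (simp_all add: s_def)
qed

end

theorem proposition1p1p9:
  fixes X :: "'a set" and l :: "'a \<Rightarrow> 'a \<Rightarrow> ereal" and x y :: "nat \<Rightarrow> 'a"
  assumes "log_scale X l"
    and "\<And>n. x n \<in> X" and "\<And>n. y n \<in> X"
    and "ls_cauchy l x" and "ls_cauchy l y"
    and "\<not> ls_equivalent l x y"
  shows "\<exists>\<Delta>::real. \<Delta> > 0 \<and>
           (\<forall>a b. partial_limit (\<lambda>n. l (x n) (y n)) a \<longrightarrow>
                  partial_limit (\<lambda>n. l (x n) (y n)) b \<longrightarrow>
                  a \<le> b + ereal \<Delta> \<and> b \<le> a + ereal \<Delta>)"
proof -
  obtain \<delta> where "log_scale_const X l \<delta>"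
    using log_scale_imp_const[OF assms(1)] ..
  then interpret log_scale_const X l \<delta> .
  obtain r where r: "\<And>a. partial_limit (\<lambda>n. l (x n) (y n)) a \<Longrightarrow>
      ereal (r - 2 * \<delta>) \<le> a \<and> a \<le> ereal (r + 2 * \<delta>)"
    using partial_limits_pinched[OF assms(2-6)] by blast
  show ?thesis
  proof (intro exI[of _ "4 * \<delta> + 1"] conjI allI impI)
    show "0 < 4 * \<delta> + 1"
      using delta_nonneg by simp
    fix a b
    assume "partial_limit (\<lambda>n. l (x n) (y n)) a" "partial_limit (\<lambda>n. l (x n) (y n)) b"
    with r have "ereal (r - 2 * \<delta>) \<le> a \<and> a \<le> ereal (r + 2 * \<delta>)"
      "ereal (r - 2 * \<delta>) \<le> b \<and> b \<le> ereal (r + 2 * \<delta>)"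
      by blast+
    then show "a \<le> b + ereal (4 * \<delta> + 1)" "b \<le> a + ereal (4 * \<delta> + 1)"
      by (cases a; cases b; simp)+
  qed
qed

end
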